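(* (i) Every sequence of applications of the rules Monadic, Horn, Shallow and Linear, applied with the rule preference of $\Rightarrow_{\mathrm{apr}}$ (Monadic before Horn before Shallow before Linear), starting from a finite clause set, terminates. (ii) The Monadic transformation is an over-approximation. (iii) The Horn transformation is an over-approximation. (iv) The Shallow transformation is an over-approximation. (v) The Linear transformation is an over-approximation.
   Context: First-order logic without equality. A clause is a finite multiset of literals written $\Gamma \rightarrow \Delta$, where $\Gamma$ is the multiset of atoms of its negative literals and $\Delta$ the multiset of atoms of its positive literals; a clause with at most one positive literal is Horn. A Herbrand interpretation $I$ is a set of ground atoms; $I \models \Gamma\rightarrow\Delta$ iff for every grounding substitution $\sigma$, $\Delta\sigma\cap I\neq\emptyset$ or $\Gamma\sigma\not\subseteq I$; $I$ is a model of a clause set $N$ if it satisfies every clause of $N$; $N$ is satisfiable if it has a model. $t[s]_p$ denotes that term (or atom) $t$ has subterm $s$ at position $p$. A predicate is monadic if it has at most one argument. A relation $\Rightarrow$ on clause sets is an over-approximation if whenever $N\Rightarrow N'$ and $N'$ is satisfiable, then $N$ is satisfiable. Fix a single fresh monadic predicate $T$ and, for each non-monadic predicate $P$, a fresh function symbol $f_P$. The rules are: Monadic: $N\cup\{C[P(t_1,\dots,t_n)]\}\Rightarrow N\cup\{C[T(f_P(t_1,\dots,t_n))]\}$, replacing an occurrence of an atom $P(t_1,\dots,t_n)$ with $n>1$ in a clause. Horn: $N\cup\{\Gamma\rightarrow E_1,\dots,E_n\}\Rightarrow N\cup\{\Gamma\rightarrow E_i\}$ for some $i$, provided $n>1$.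 Shallow: $N\cup\{\Gamma\rightarrow E[s]_p\}\Rightarrow N\cup\{S(x),\Gamma_1\rightarrow E[x]_p\}\cup\{\Gamma_2\rightarrow S(s)\}$, provided $s$ is a complex (non-variable) term, $p$ is not a top position of an argument of $E$ (i.e. $s$ is a proper subterm of an argument of $E$), $x$ is a fresh variable, $S$ a fresh monadic predicate, and $\Gamma_1\cup\Gamma_2=\Gamma$. Linear: $N\cup\{\Gamma\rightarrow E[x]_{p,q}\}\Rightarrow N\cup\{\Gamma\{x\mapsto x'\},\Gamma\rightarrow E[x']_q\}$, provided $x'$ is a fresh variable and $p,q$ are two different occurrences of $x$ in $E$. $\Rightarrow_{\mathrm{apr}}$ is the union of these four relations, applied with preference Monadic before Horn before Shallow before Linear.
   Formalization: The Monadic rule replaces every atom $P(t_1,\dots,t_n)$ with $n>1$ in every clause of N by $T(f_P(t_1,\dots,t_n))$ at once, rather than a single occurrence in one clause. The paper assumes this as well. *)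

theory Defs
  imports "HOL-Library.Multiset"
begin

datatype ('f, 'v) trm = Var 'v | Fn 'f "('f, 'v) trm list"

datatype ('p, 'f, 'v) atm = Atm 'p "('f, 'v) trm list"

fun atm_pred :: "('p, 'f, 'v) atm \<Rightarrow> 'p" where
  "atm_pred (Atm P ts) = P"

fun atm_args :: "('p, 'f, 'v) atm \<Rightarrow> ('f, 'v) trm list" where
  "atm_args (Atm P ts) = ts"

text \<open>A clause Gamma -> Delta: pair of multisets (negative atoms, positive atoms).\<close>
type_synonym ('p, 'f, 'v) cls = "('p, 'f, 'v) atm multiset \<times> ('p, 'f, 'v) atm multiset"

fun vars_trm :: "('f, 'v) trm \<Rightarrow> 'v set" where
  "vars_trm (Var x) = {x}"
| "vars_trm (Fn f ts) = (\<Union>t\<in>set ts. vars_trm t)"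

fun funs_trm :: "('f, 'v) trm \<Rightarrow> 'f set" where
  "funs_trm (Var x) = {}"
| "funs_trm (Fn f ts) = insert f (\<Union>t\<in>set ts. funs_trm t)"

definition vars_atm :: "('p, 'f, 'v) atm \<Rightarrow> 'v set" where
  "vars_atm A = (\<Union>t\<in>set (atm_args A). vars_trm t)"

definition funs_atm :: "('p, 'f, 'v) atm \<Rightarrow> 'f set" where
  "funs_atm A = (\<Union>t\<in>set (atm_args A). funs_trm t)"

definition atoms_cls :: "('p, 'f, 'v) cls \<Rightarrow> ('p, 'f, 'v) atm set" where
  "atoms_cls C = set_mset (fst C) \<union> set_mset (snd C)"

definition vars_cls :: "('p, 'f, 'v) cls \<Rightarrow> 'v set" where
  "vars_cls C = (\<Union>A\<in>atoms_cls C. vars_atm A)"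

definition preds_set :: "('p, 'f, 'v) cls set \<Rightarrow> 'p set" where
  "preds_set N = (\<Union>C\<in>N. atm_pred ` atoms_cls C)"

definition funs_set :: "('p, 'f, 'v) cls set \<Rightarrow> 'f set" where
  "funs_set N = (\<Union>C\<in>N. \<Union>A\<in>atoms_cls C. funs_atm A)"

fun subst :: "('v \<Rightarrow> ('f, 'v) trm) \<Rightarrow> ('f, 'v) trm \<Rightarrow> ('f, 'v) trm" where
  "subst \<sigma> (Var x) = \<sigma> x"
| "subst \<sigma> (Fn f ts) = Fn f (map (subst \<sigma>) ts)"

fun subst_atm :: "('v \<Rightarrow> ('f, 'v) trm) \<Rightarrow> ('p, 'f, 'v) atm \<Rightarrow> ('p, 'f, 'v) atm" where
  "subst_atm \<sigma> (Atm P ts) = Atm P (map (subst \<sigma>) ts)"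

definition ground_trm :: "('f, 'v) trm \<Rightarrow> bool" where
  "ground_trm t \<longleftrightarrow> vars_trm t = {}"

definition ground_atm :: "('p, 'f, 'v) atm \<Rightarrow> bool" where
  "ground_atm A \<longleftrightarrow> vars_atm A = {}"

definition grounding :: "('v \<Rightarrow> ('f, 'v) trm) \<Rightarrow> bool" where
  "grounding \<sigma> \<longleftrightarrow> (\<forall>x. ground_trm (\<sigma> x))"

definition true_cls :: "('p, 'f, 'v) atm set \<Rightarrow> ('p, 'f, 'v) cls \<Rightarrow> bool" where
  "true_cls I C \<longleftrightarrow> (\<forall>\<sigma>. grounding \<sigma> \<longrightarrow>
      (subst_atm \<sigma> ` set_mset (snd C)) \<inter> I \<noteq> {} \<or>
      \<not> (subst_atm \<sigma> ` set_mset (fst C) \<subseteq> I))"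

definition herbrand_interp :: "('p, 'f, 'v) atm set \<Rightarrow> bool" where
  "herbrand_interp I \<longleftrightarrow> (\<forall>A\<in>I. ground_atm A)"

definition is_model :: "('p, 'f, 'v) atm set \<Rightarrow> ('p, 'f, 'v) cls set \<Rightarrow> bool" where
  "is_model I N \<longleftrightarrow> herbrand_interp I \<and> (\<forall>C\<in>N. true_cls I C)"

definition satisfiable :: "('p, 'f, 'v) cls set \<Rightarrow> bool" where
  "satisfiable N \<longleftrightarrow> (\<exists>I. is_model I N)"

definition over_approximation :: "(('p, 'f, 'v) cls set \<Rightarrow> ('p, 'f, 'v) cls set \<Rightarrow> bool) \<Rightarrow> bool" where
  "over_approximation R \<longleftrightarrow> (\<forall>N N'. R N N' \<longrightarrow> satisfiable N' \<longrightarrow> satisfiable N)"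

text \<open>Positions in terms are lists of argument indices (0-based).\<close>
primrec valid_pos :: "('f, 'v) trm \<Rightarrow> nat list \<Rightarrow> bool" where
  "valid_pos t [] = True"
| "valid_pos t (i # p) = (case t of Var x \<Rightarrow> False
                           | Fn f ts \<Rightarrow> i < length ts \<and> valid_pos (ts ! i) p)"

primrec subt_at :: "('f, 'v) trm \<Rightarrow> nat list \<Rightarrow> ('f, 'v) trm" where
  "subt_at t [] = t"
| "subt_at t (i # p) = (case t of Var x \<Rightarrow> Var x
                         | Fn f ts \<Rightarrow> subt_at (ts ! i) p)"

primrec repl_at :: "('f, 'v) trm \<Rightarrow> nat list \<Rightarrow> ('f, 'v) trm \<Rightarrow> ('f, 'v) trm" where
  "repl_at t [] s = s"
| "repl_at t (i # p) s = (case t of Var x \<Rightarrow> Var x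
                           | Fn f ts \<Rightarrow> Fn f (ts[i := repl_at (ts ! i) p s]))"

text \<open>Positions in an atom P(t1,...,tn): i # q denotes position q in argument t_(i+1).
  The empty list is the (top) position of the atom itself, which is not a term position.\<close>
fun valid_apos :: "('p, 'f, 'v) atm \<Rightarrow> nat list \<Rightarrow> bool" where
  "valid_apos A [] = False"
| "valid_apos (Atm P ts) (i # q) = (i < length ts \<and> valid_pos (ts ! i) q)"

fun asubt_at :: "('p, 'f, 'v) atm \<Rightarrow> nat list \<Rightarrow> ('f, 'v) trm" where
  "asubt_at (Atm P ts) (i # q) = subt_at (ts ! i) q"
| "asubt_at (Atm P ts) [] = undefined"

fun arepl_at :: "('p, 'f, 'v) atm \<Rightarrow> nat list \<Rightarrow> ('f, 'v) trm \<Rightarrow> ('p, 'f, 'v) atm" where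
  "arepl_at (Atm P ts) (i # q) s = Atm P (ts[i := repl_at (ts ! i) q s])"
| "arepl_at A [] s = A"

fun mu_atm :: "'p \<Rightarrow> ('p \<Rightarrow> 'f) \<Rightarrow> 'p \<Rightarrow> ('p, 'f, 'v) atm \<Rightarrow> ('p, 'f, 'v) atm" where
  "mu_atm T fP P (Atm Q ts) =
     (if Q = P \<and> length ts > 1 then Atm T [Fn (fP P) ts] else Atm Q ts)"

definition mu_cls :: "'p \<Rightarrow> ('p \<Rightarrow> 'f) \<Rightarrow> 'p \<Rightarrow> ('p, 'f, 'v) cls \<Rightarrow> ('p, 'f, 'v) cls" where
  "mu_cls T fP P C = (image_mset (mu_atm T fP P) (fst C), image_mset (mu_atm T fP P) (snd C))"

definition monadic_step ::
  "'p \<Rightarrow> ('p \<Rightarrow> 'f) \<Rightarrow> ('p, 'f, 'v) cls set \<Rightarrow> ('p, 'f, 'v) cls set \<Rightarrow> bool" where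
  "monadic_step T fP N N' \<longleftrightarrow>
     (\<exists>P. (\<exists>C\<in>N. \<exists>ts. Atm P ts \<in> atoms_cls C \<and> length ts > 1) \<and>
          N' = mu_cls T fP P ` N)"

definition horn_step :: "('p, 'f, 'v) cls set \<Rightarrow> ('p, 'f, 'v) cls set \<Rightarrow> bool" where
  "horn_step N N' \<longleftrightarrow>
     (\<exists>\<Gamma> \<Delta> E. (\<Gamma>, \<Delta>) \<in> N \<and> size \<Delta> > 1 \<and> E \<in># \<Delta> \<and>
        N' = (N - {(\<Gamma>, \<Delta>)}) \<union> {(\<Gamma>, {#E#})})"

definition shallow_step :: "('p, 'f, 'v) cls set \<Rightarrow> ('p, 'f, 'v) cls set \<Rightarrow> bool" where
  "shallow_step N N' \<longleftrightarrow>
     (\<exists>\<Gamma> E i q s x S \<Gamma>1 \<Gamma>2.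
        (\<Gamma>, {#E#}) \<in> N \<and>
        valid_apos E (i # q) \<and> q \<noteq> [] \<and> asubt_at E (i # q) = s \<and>
        (\<exists>f ts. s = Fn f ts) \<and>
        x \<notin> vars_cls (\<Gamma>, {#E#}) \<and>
        S \<notin> preds_set N \<and>
        \<Gamma>1 \<union># \<Gamma>2 = \<Gamma> \<and>
        N' = (N - {(\<Gamma>, {#E#})}) \<union>
               {(add_mset (Atm S [Var x]) \<Gamma>1, {#arepl_at E (i # q) (Var x)#}),
                (\<Gamma>2, {#Atm S [s]#})})"

definition linear_step :: "('p, 'f, 'v) cls set \<Rightarrow> ('p, 'f, 'v) cls set \<Rightarrow> bool" where
  "linear_step N N' \<longleftrightarrow>
     (\<exists>\<Gamma> E p q x x'.
        (\<Gamma>, {#E#}) \<in> N \<and>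
        p \<noteq> q \<and> valid_apos E p \<and> valid_apos E q \<and>
        asubt_at E p = Var x \<and> asubt_at E q = Var x \<and>
        x' \<notin> vars_cls (\<Gamma>, {#E#}) \<and>
        N' = (N - {(\<Gamma>, {#E#})}) \<union>
               {(image_mset (subst_atm (Var(x := Var x'))) \<Gamma> + \<Gamma>,
                 {#arepl_at E q (Var x')#})})"

definition apr_step ::
  "'p \<Rightarrow> ('p \<Rightarrow> 'f) \<Rightarrow> ('p, 'f, 'v) cls set \<Rightarrow> ('p, 'f, 'v) cls set \<Rightarrow> bool" where
  "apr_step T fP N N' \<longleftrightarrow>
     monadic_step T fP N N' \<or>
     ((\<nexists>M. monadic_step T fP N M) \<and> horn_step N N') \<or>
     ((\<nexists>M. monadic_step T fP N M) \<and> (\<nexists>M. horn_step N M) \<and> shallow_step N N') \<or>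
     ((\<nexists>M. monadic_step T fP N M) \<and> (\<nexists>M. horn_step N M) \<and> (\<nexists>M. shallow_step N M) \<and>
      linear_step N N')"

end

theory Submission
  imports Defs
begin

text \<open>
  Termination: every rule application decreases, lexicographically, the number of non-monadic
  predicates, the number of non-Horn clauses, the number of function symbols occurring strictly
  below the arguments of positive literals, and the number of repeated variable occurrences in
  positive literals. Monadic removes a non-monadic predicate; Horn removes a non-Horn clause and
  adds only a Horn one; Shallow trades the function symbols of \<open>s\<close> inside \<open>E\<close> for the smaller
  number below the root of \<open>s\<close> in \<open>S(s)\<close>; Linear renames one of at least two occurrences of
  \<open>x\<close> apart. So termination does not even depend on the rule preference.

  Soundness: for Horn, Shallow and Linear the replaced clause follows from the new ones
  (instantiate the fresh variable by \<open>s\<close>, resp. by \<open>x\<close>), so a model of the new set is a model of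
  the old one. For Monadic, a model is pulled back along \<open>P(ts) \<mapsto> T(f\<^sub>P(ts))\<close>.
\<close>

section \<open>Substitutions and positions\<close>

lemma subst_cong: "(\<And>y. y \<in> vars_trm t \<Longrightarrow> \<sigma> y = \<tau> y) \<Longrightarrow> subst \<sigma> t = subst \<tau> t"
  by (induction t) auto

lemma subst_subst: "subst \<sigma> (subst \<rho> t) = subst (\<lambda>y. subst \<sigma> (\<rho> y)) t"
  by (induction t) auto

lemma vars_trm_subst: "vars_trm (subst \<sigma> t) = (\<Union>y\<in>vars_trm t. vars_trm (\<sigma> y))"
  by (induction t) auto

lemma ground_trm_subst: "grounding \<sigma> \<Longrightarrow> ground_trm (subst \<sigma> t)"
  by (simp add: grounding_def ground_trm_def vars_trm_subst)

lemma grounding_fun_upd: "grounding \<sigma> \<Longrightarrow> ground_trm t \<Longrightarrow> grounding (\<sigma>(x := t))"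
  by (simp add: grounding_def)

lemma ground_atm_subst_atm: "grounding \<sigma> \<Longrightarrow> ground_atm (subst_atm \<sigma> A)"
  by (cases A) (auto simp: ground_atm_def vars_atm_def vars_trm_subst grounding_def ground_trm_def)

lemma subst_atm_cong:
  "(\<And>y. y \<in> vars_atm A \<Longrightarrow> \<sigma> y = \<tau> y) \<Longrightarrow> subst_atm \<sigma> A = subst_atm \<tau> A"
  by (cases A) (auto simp: vars_atm_def intro!: subst_cong)

lemma subst_atm_subst_atm: "subst_atm \<sigma> (subst_atm \<rho> A) = subst_atm (\<lambda>y. subst \<sigma> (\<rho> y)) A"
  by (cases A) (auto simp: subst_subst)

lemma vars_cls_unit: "vars_cls (\<Gamma>, {#E#}) = vars_atm E \<union> (\<Union>A\<in>set_mset \<Gamma>. vars_atm A)"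
  by (auto simp: vars_cls_def atoms_cls_def)

lemma vars_subt_at: "valid_pos t p \<Longrightarrow> vars_trm (subt_at t p) \<subseteq> vars_trm t"
  by (induction p arbitrary: t) (auto split: trm.splits dest!: nth_mem)

lemma subst_repl_at:
  assumes "valid_pos t q" and "subst \<sigma>' r = subst \<sigma> (subt_at t q)"
    and "\<And>y. y \<in> vars_trm t \<Longrightarrow> \<sigma>' y = \<sigma> y"
  shows "subst \<sigma>' (repl_at t q r) = subst \<sigma> t"
  using assms
proof (induction q arbitrary: t)
  case Nil
  then show ?case by simp
next
  case (Cons i q)
  then obtain f ts where t: "t = Fn f ts" and i: "i < length ts" and v: "valid_pos (ts ! i) q"
    by (auto split: trm.splits)
  have same_args: "map (subst \<sigma>') ts = map (subst \<sigma>) ts"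
    using Cons.prems(3) t by (auto intro!: subst_cong)
  have "ts ! i \<in> set ts" using i by simp
  then have "\<sigma>' y = \<sigma> y" if "y \<in> vars_trm (ts ! i)" for y
    using Cons.prems(3) t that by auto
  then have "subst \<sigma>' (repl_at (ts ! i) q r) = subst \<sigma> (ts ! i)"
    using Cons.IH[OF v] Cons.prems(2) t by simp
  then have "map (subst \<sigma>') (ts[i := repl_at (ts ! i) q r]) = map (subst \<sigma>) ts"
    using i by (simp add: map_update same_args) (metis list_update_id nth_map)
  then show ?case using t by simp
qed

text \<open>Positions in an atom \<open>P(ts)\<close> are those of the term \<open>f(ts)\<close> for any function symbol \<open>f\<close>;
  this lifts the term-level lemmas to atoms (with \<open>f = undefined\<close>).\<close>

lemma valid_apos_Atm: "valid_apos (Atm P ts) p \<longleftrightarrow> p \<noteq> [] \<and> valid_pos (Fn f ts) p"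
  by (cases p) auto

lemma asubt_at_Atm: "p \<noteq> [] \<Longrightarrow> asubt_at (Atm P ts) p = subt_at (Fn f ts) p"
  by (cases p) auto

lemma arepl_at_Atm:
  "p \<noteq> [] \<Longrightarrow> \<exists>us. arepl_at (Atm P ts) p r = Atm P us \<and> repl_at (Fn f ts) p r = Fn f us"
  by (cases p) auto

lemma subst_atm_arepl_at:
  assumes "valid_apos E p" and "subst \<sigma>' r = subst \<sigma> (asubt_at E p)"
    and "\<And>y. y \<in> vars_atm E \<Longrightarrow> \<sigma>' y = \<sigma> y"
  shows "subst_atm \<sigma>' (arepl_at E p r) = subst_atm \<sigma> E"
proof (cases E)
  case (Atm P ts)
  have "p \<noteq> []" using assms(1) Atm by (cases p) auto
  have "subst \<sigma>' (repl_at (Fn undefined ts) p r) = subst \<sigma> (Fn undefined ts)"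
    using assms Atm \<open>p \<noteq> []\<close>
    by (intro subst_repl_at)
      (auto simp: valid_apos_Atm[where f = undefined] asubt_at_Atm[where f = undefined] vars_atm_def)
  moreover obtain us where "arepl_at E p r = Atm P us" "repl_at (Fn undefined ts) p r = Fn undefined us"
    using arepl_at_Atm[OF \<open>p \<noteq> []\<close>, where P = P and ts = ts and r = r and f = undefined] Atm
    by blast
  ultimately show ?thesis using Atm by simp
qed

section \<open>Soundness of the approximation rules\<close>

lemma true_cls_unit_iff:
  "true_cls I (\<Gamma>, {#E#}) \<longleftrightarrow>
     (\<forall>\<sigma>. grounding \<sigma> \<longrightarrow> subst_atm \<sigma> ` set_mset \<Gamma> \<subseteq> I \<longrightarrow> subst_atm \<sigma> E \<in> I)"
  by (auto simp: true_cls_def)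

lemma true_cls_subset_head: "true_cls I (\<Gamma>, \<Delta>') \<Longrightarrow> \<Delta>' \<subseteq># \<Delta> \<Longrightarrow> true_cls I (\<Gamma>, \<Delta>)"
  unfolding true_cls_def by (fastforce dest: set_mset_mono)

lemma satisfiable_replace:
  assumes "satisfiable N'" and "N - {C} \<subseteq> N'" and "\<And>I. \<forall>D\<in>N'. true_cls I D \<Longrightarrow> true_cls I C"
  shows "satisfiable N"
  using assms unfolding satisfiable_def is_model_def by blast

lemma subst_atm_mu_atm: "subst_atm \<sigma> (mu_atm T fP P A) = mu_atm T fP P (subst_atm \<sigma> A)"
  by (cases A) auto

lemma true_cls_mu_cls:
  fixes C :: "('p, 'f, 'v) cls"
  assumes "true_cls I (mu_cls T fP P C)"
  shows "true_cls {A. ground_atm A \<and> mu_atm T fP P A \<in> I} C"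
  unfolding true_cls_def
proof (intro allI impI)
  fix \<sigma> :: "'v \<Rightarrow> ('f, 'v) trm"
  assume \<sigma>: "grounding \<sigma>"
  then have "mu_atm T fP P ` subst_atm \<sigma> ` set_mset (snd C) \<inter> I \<noteq> {} \<or>
      \<not> mu_atm T fP P ` subst_atm \<sigma> ` set_mset (fst C) \<subseteq> I"
    using assms by (simp add: true_cls_def mu_cls_def subst_atm_mu_atm image_image)
  then show "subst_atm \<sigma> ` set_mset (snd C) \<inter> {A. ground_atm A \<and> mu_atm T fP P A \<in> I} \<noteq> {} \<or>
      \<not> subst_atm \<sigma> ` set_mset (fst C) \<subseteq> {A. ground_atm A \<and> mu_atm T fP P A \<in> I}"
    using ground_atm_subst_atm[OF \<sigma>] by blast
qed

lemma over_approximation_monadic_step: "over_approximation (monadic_step T fP)"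
  unfolding over_approximation_def
proof (intro allI impI)
  fix N N'
  assume "monadic_step T fP N N'" and "satisfiable N'"
  then obtain P I where "N' = mu_cls T fP P ` N" and "is_model I N'"
    unfolding monadic_step_def satisfiable_def by blast
  then have "is_model {A. ground_atm A \<and> mu_atm T fP P A \<in> I} N"
    by (auto simp: is_model_def herbrand_interp_def intro: true_cls_mu_cls)
  then show "satisfiable N" unfolding satisfiable_def by blast
qed

lemma over_approximation_horn_step: "over_approximation horn_step"
  unfolding over_approximation_def horn_step_def
proof (intro allI impI, elim exE conjE)
  fix N N' \<Gamma> \<Delta> E
  assume "E \<in># \<Delta>" and "N' = N - {(\<Gamma>, \<Delta>)} \<union> {(\<Gamma>, {#E#})}" and "satisfiable N'"
  then show "satisfiable N"
    by (intro satisfiable_replace[of N' N "(\<Gamma>, \<Delta>)"])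
      (auto intro: true_cls_subset_head)
qed

lemma true_cls_shallow_split:
  assumes "valid_apos E p" and "x \<notin> vars_cls (\<Gamma>, {#E#})" and "\<Gamma>1 \<union># \<Gamma>2 = \<Gamma>"
    and "true_cls I (add_mset (Atm S [Var x]) \<Gamma>1, {#arepl_at E p (Var x)#})"
    and "true_cls I (\<Gamma>2, {#Atm S [asubt_at E p]#})"
  shows "true_cls I (\<Gamma>, {#E#})"
  unfolding true_cls_unit_iff
proof (intro allI impI)
  fix \<sigma>
  assume \<sigma>: "grounding \<sigma>" and \<Gamma>: "subst_atm \<sigma> ` set_mset \<Gamma> \<subseteq> I"
  define \<sigma>' where "\<sigma>' = \<sigma>(x := subst \<sigma> (asubt_at E p))"
  have "grounding \<sigma>'"
    using \<sigma> by (simp add: \<sigma>'_def grounding_fun_upd ground_trm_subst)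
  have "subst_atm \<sigma> ` set_mset \<Gamma>2 \<subseteq> I"
    using assms(3) \<Gamma> by auto
  then have "subst_atm \<sigma> (Atm S [asubt_at E p]) \<in> I"
    using assms(5) \<sigma> by (simp add: true_cls_unit_iff)
  moreover have "subst_atm \<sigma>' A = subst_atm \<sigma> A" if "A \<in># \<Gamma>" for A
    using assms(2) that by (intro subst_atm_cong) (auto simp: vars_cls_unit \<sigma>'_def)
  ultimately have "subst_atm \<sigma>' ` set_mset (add_mset (Atm S [Var x]) \<Gamma>1) \<subseteq> I"
    using assms(3) \<Gamma> by (auto simp: \<sigma>'_def)
  then have "subst_atm \<sigma>' (arepl_at E p (Var x)) \<in> I"
    using assms(4) \<open>grounding \<sigma>'\<close> by (auto simp: true_cls_unit_iff)
  moreover have "subst_atm \<sigma>' (arepl_at E p (Var x)) = subst_atm \<sigma> E"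
    using assms(1,2) by (intro subst_atm_arepl_at) (auto simp: vars_cls_unit \<sigma>'_def)
  ultimately show "subst_atm \<sigma> E \<in> I" by simp
qed

lemma over_approximation_shallow_step: "over_approximation shallow_step"
  unfolding over_approximation_def shallow_step_def
proof (intro allI impI, elim exE conjE)
  fix N N' \<Gamma> E i q s x S \<Gamma>1 \<Gamma>2
  assume "valid_apos E (i # q)" "asubt_at E (i # q) = s" "x \<notin> vars_cls (\<Gamma>, {#E#})"
    "\<Gamma>1 \<union># \<Gamma>2 = \<Gamma>" "satisfiable N'"
    "N' = N - {(\<Gamma>, {#E#})} \<union> {(add_mset (Atm S [Var x]) \<Gamma>1, {#arepl_at E (i # q) (Var x)#}),
                               (\<Gamma>2, {#Atm S [s]#})}"
  then show "satisfiable N"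
    by (intro satisfiable_replace[of N' N "(\<Gamma>, {#E#})"]) (auto intro: true_cls_shallow_split)
qed

lemma true_cls_linear_rename:
  assumes "valid_apos E q" and "asubt_at E q = Var x" and "x' \<notin> vars_cls (\<Gamma>, {#E#})"
    and "true_cls I (image_mset (subst_atm (Var(x := Var x'))) \<Gamma> + \<Gamma>, {#arepl_at E q (Var x')#})"
  shows "true_cls I (\<Gamma>, {#E#})"
  unfolding true_cls_unit_iff
proof (intro allI impI)
  fix \<sigma>
  assume \<sigma>: "grounding \<sigma>" and \<Gamma>: "subst_atm \<sigma> ` set_mset \<Gamma> \<subseteq> I"
  define \<sigma>' where "\<sigma>' = \<sigma>(x' := \<sigma> x)"
  have "grounding \<sigma>'"
    using \<sigma> by (simp add: \<sigma>'_def grounding_def)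
  have "subst_atm \<sigma>' A = subst_atm \<sigma> A" if "A \<in># \<Gamma>" for A
    using assms(3) that by (intro subst_atm_cong) (auto simp: vars_cls_unit \<sigma>'_def)
  moreover have "subst_atm \<sigma>' (subst_atm (Var(x := Var x')) A) = subst_atm \<sigma> A" if "A \<in># \<Gamma>" for A
    unfolding subst_atm_subst_atm
    using assms(3) that by (intro subst_atm_cong) (auto simp: vars_cls_unit \<sigma>'_def)
  ultimately have "subst_atm \<sigma>' ` set_mset (image_mset (subst_atm (Var(x := Var x'))) \<Gamma> + \<Gamma>) \<subseteq> I"
    using \<Gamma> by auto
  then have "subst_atm \<sigma>' (arepl_at E q (Var x')) \<in> I"
    using assms(4) \<open>grounding \<sigma>'\<close> by (auto simp: true_cls_unit_iff)
  moreover have "subst_atm \<sigma>' (arepl_at E q (Var x')) = subst_atm \<sigma> E"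
    using assms(1-3) by (intro subst_atm_arepl_at) (auto simp: vars_cls_unit \<sigma>'_def)
  ultimately show "subst_atm \<sigma> E \<in> I" by simp
qed

lemma over_approximation_linear_step: "over_approximation linear_step"
  unfolding over_approximation_def linear_step_def
proof (intro allI impI, elim exE conjE)
  fix N N' \<Gamma> E p q x x'
  assume "valid_apos E q" "asubt_at E q = Var x" "x' \<notin> vars_cls (\<Gamma>, {#E#})" "satisfiable N'"
    "N' = N - {(\<Gamma>, {#E#})} \<union>
       {(image_mset (subst_atm (Var(x := Var x'))) \<Gamma> + \<Gamma>, {#arepl_at E q (Var x')#})}"
  then show "satisfiable N"
    by (intro satisfiable_replace[of N' N "(\<Gamma>, {#E#})"]) (auto intro: true_cls_linear_rename)
qed

section \<open>Termination\<close>

fun fun_count :: "('f, 'v) trm \<Rightarrow> nat" where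
  "fun_count (Var x) = 0"
| "fun_count (Fn f ts) = Suc (\<Sum>t\<leftarrow>ts. fun_count t)"

fun inner_fun_count :: "('f, 'v) trm \<Rightarrow> nat" where
  "inner_fun_count (Var x) = 0"
| "inner_fun_count (Fn f ts) = (\<Sum>t\<leftarrow>ts. fun_count t)"

fun var_occs :: "('f, 'v) trm \<Rightarrow> 'v multiset" where
  "var_occs (Var x) = {#x#}"
| "var_occs (Fn f ts) = (\<Sum>t\<leftarrow>ts. var_occs t)"

lemma sum_list_map_update:
  fixes g :: "'a \<Rightarrow> 'b::comm_monoid_add"
  shows "i < length xs \<Longrightarrow> (\<Sum>x\<leftarrow>xs[i := y]. g x) + g (xs ! i) = (\<Sum>x\<leftarrow>xs. g x) + g y"
  by (induction xs arbitrary: i) (auto simp: algebra_simps split: nat.split)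

lemma nth_add_nth_le_sum_list:
  fixes xs :: "nat list"
  assumes "i < length xs" and "j < length xs" and "i \<noteq> j"
  shows "xs ! i + xs ! j \<le> sum_list xs"
proof -
  have "(xs[i := 0]) ! j \<le> sum_list (xs[i := 0])"
    using assms by (intro elem_le_sum_list) auto
  then show ?thesis
    using sum_list_map_update[OF assms(1), of id 0] assms by simp
qed

lemma fun_count_repl_at:
  "valid_pos t q \<Longrightarrow> fun_count (repl_at t q r) + fun_count (subt_at t q) = fun_count t + fun_count r"
proof (induction q arbitrary: t)
  case (Cons i q)
  then obtain f ts where "t = Fn f ts" "i < length ts" "valid_pos (ts ! i) q"
    by (auto split: trm.splits)
  then show ?case
    using sum_list_map_update[of i ts fun_count "repl_at (ts ! i) q r"] Cons.IH[of "ts ! i"] by simp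
qed simp

lemma inner_fun_count_repl_at:
  assumes "valid_pos t q" and "q \<noteq> []"
  shows "inner_fun_count (repl_at t q r) + fun_count (subt_at t q) = inner_fun_count t + fun_count r"
proof -
  obtain i q' where "q = i # q'" using assms(2) by (cases q) auto
  moreover obtain f ts where "t = Fn f ts" "i < length ts" "valid_pos (ts ! i) q'"
    using assms(1) \<open>q = i # q'\<close> by (auto split: trm.splits)
  ultimately show ?thesis
    using sum_list_map_update[of i ts fun_count "repl_at (ts ! i) q' r"]
      fun_count_repl_at[of "ts ! i" q' r] by simp
qed

lemma inner_fun_count_repl_at_Var:
  "valid_pos t q \<Longrightarrow> subt_at t q = Var x \<Longrightarrow> inner_fun_count (repl_at t q (Var y)) = inner_fun_count t"
  using inner_fun_count_repl_at[of t q "Var y"] by (cases "q = []") auto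

lemma var_occs_repl_at:
  "valid_pos t q \<Longrightarrow> subt_at t q = Var x \<Longrightarrow>
   var_occs (repl_at t q (Var y)) + {#x#} = var_occs t + {#y#}"
proof (induction q arbitrary: t)
  case (Cons i q)
  then obtain f ts where "t = Fn f ts" "i < length ts" "valid_pos (ts ! i) q"
    by (auto split: trm.splits)
  moreover have "var_occs (repl_at (ts ! i) q (Var y)) + {#x#} = var_occs (ts ! i) + {#y#}"
    using Cons calculation by simp
  ultimately have "var_occs (repl_at t (i # q) (Var y)) + {#x#} + var_occs (ts ! i)
      = var_occs t + {#y#} + var_occs (ts ! i)"
    using sum_list_map_update[of i ts var_occs "repl_at (ts ! i) q (Var y)"]
    by (simp add: algebra_simps)
  then show ?case by simp
qed simp

lemma count_sum_list: "count (\<Sum>x\<leftarrow>xs. g x) a = (\<Sum>x\<leftarrow>xs. count (g x) a)"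
  by (induction xs) auto

lemma set_var_occs: "set_mset (var_occs t) = vars_trm t"
  by (induction t) auto

lemma count_var_occs_ge_2:
  "valid_pos t p \<Longrightarrow> valid_pos t q \<Longrightarrow> p \<noteq> q \<Longrightarrow> subt_at t p = Var x \<Longrightarrow> subt_at t q = Var x \<Longrightarrow>
   2 \<le> count (var_occs t) x"
proof (induction t arbitrary: p q)
  case (Var y)
  then show ?case by (cases p; cases q) auto
next
  case (Fn f ts)
  obtain i p' where p: "p = i # p'" using Fn.prems by (cases p) auto
  obtain j q' where q: "q = j # q'" using Fn.prems by (cases q) auto
  have i: "i < length ts" "valid_pos (ts ! i) p'" "subt_at (ts ! i) p' = Var x"
    using Fn.prems p by auto
  have j: "j < length ts" "valid_pos (ts ! j) q'" "subt_at (ts ! j) q' = Var x"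
    using Fn.prems q by auto
  let ?cs = "map (\<lambda>t. count (var_occs t) x) ts"
  have count: "count (var_occs (Fn f ts)) x = sum_list ?cs"
    by (simp add: count_sum_list)
  show ?case
  proof (cases "i = j")
    case True
    then have "2 \<le> count (var_occs (ts ! i)) x"
      using Fn.IH[of "ts ! i" p' q'] Fn.prems p q i j by auto
    then show ?thesis
      using count elem_le_sum_list[of i ?cs] i by simp
  next
    case False
    have "0 < count (var_occs (ts ! i)) x" "0 < count (var_occs (ts ! j)) x"
      using i j vars_subt_at[of "ts ! i" p'] vars_subt_at[of "ts ! j" q'] by (auto simp: set_var_occs)
    moreover have "count (var_occs (ts ! i)) x + count (var_occs (ts ! j)) x \<le> sum_list ?cs"
      using nth_add_nth_le_sum_list[of i ?cs j] i j False by simp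
    ultimately show ?thesis
      using count by (simp del: count_greater_zero_iff)
  qed
qed

definition deep_fun_count :: "('p, 'f, 'v) atm \<Rightarrow> nat" where
  "deep_fun_count E = (\<Sum>t\<leftarrow>atm_args E. inner_fun_count t)"

definition atm_var_occs :: "('p, 'f, 'v) atm \<Rightarrow> 'v multiset" where
  "atm_var_occs E = (\<Sum>t\<leftarrow>atm_args E. var_occs t)"

definition nonlinearity :: "('p, 'f, 'v) atm \<Rightarrow> nat" where
  "nonlinearity E = size (atm_var_occs E) - card (vars_atm E)"

lemma atm_var_occs_Atm: "atm_var_occs (Atm P ts) = var_occs (Fn f ts)"
  by (simp add: atm_var_occs_def)

lemma set_atm_var_occs: "set_mset (atm_var_occs E) = vars_atm E"
  by (cases E) (auto simp: atm_var_occs_def vars_atm_def set_var_occs)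

lemma card_set_mset_le_size: "card (set_mset M) \<le> size M"
  by (induction M) (auto simp: card_insert_if)

lemma deep_fun_count_arepl_at:
  assumes "valid_apos E (i # q)"
  shows "deep_fun_count (arepl_at E (i # q) r) + inner_fun_count (asubt_at E [i])
       = deep_fun_count E + inner_fun_count (repl_at (asubt_at E [i]) q r)"
  using assms sum_list_map_update[of i "atm_args E" inner_fun_count]
  by (cases E) (simp add: deep_fun_count_def)

lemma deep_fun_count_shallow_split:
  assumes "valid_apos E (i # q)" and "q \<noteq> []" and "asubt_at E (i # q) = Fn f us"
  shows "deep_fun_count (arepl_at E (i # q) (Var x)) + deep_fun_count (Atm S [Fn f us])
       < deep_fun_count E"
proof -
  have "inner_fun_count (repl_at (asubt_at E [i]) q (Var x)) + fun_count (Fn f us)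
      = inner_fun_count (asubt_at E [i])"
    using assms inner_fun_count_repl_at[of "asubt_at E [i]" q "Var x"] by (cases E) auto
  then show ?thesis
    using deep_fun_count_arepl_at[OF assms(1), of "Var x"] by (simp add: deep_fun_count_def)
qed

lemma deep_fun_count_arepl_at_Var:
  assumes "valid_apos E p" and "asubt_at E p = Var x"
  shows "deep_fun_count (arepl_at E p (Var y)) = deep_fun_count E"
proof -
  obtain i q where p: "p = i # q" using assms(1) by (cases p) auto
  have "inner_fun_count (repl_at (asubt_at E [i]) q (Var y)) = inner_fun_count (asubt_at E [i])"
    using assms p by (cases E) (auto intro: inner_fun_count_repl_at_Var)
  then show ?thesis
    using deep_fun_count_arepl_at[of E i q "Var y"] assms(1) p by simp
qed

lemma size_minus_card_set_mset_less:
  assumes eq: "M' + {#x#} = M + {#y#}" and "2 \<le> count M x" and "y \<notin># M"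
  shows "size M' - card (set_mset M') < size M - card (set_mset M)"
proof -
  have "x \<noteq> y"
    using assms(2,3) by (metis count_eq_zero_iff not_numeral_le_zero)
  have "count M' z = count M z + (if z = y then 1 else 0) - (if z = x then 1 else 0)" for z
    using arg_cong[OF eq, of "\<lambda>M. count M z"] by (auto split: if_splits)
  then have "z \<in># M' \<longleftrightarrow> z = y \<or> z \<in># M" for z
    unfolding count_greater_zero_iff[symmetric]
    using assms(2) \<open>x \<noteq> y\<close> by (auto simp del: count_greater_zero_iff)
  then have "set_mset M' = insert y (set_mset M)"
    by auto
  then have "card (set_mset M') = Suc (card (set_mset M))"
    using assms(3) by simp
  moreover have "size M' = size M"
    using arg_cong[OF eq, of size] by simp
  ultimately show ?thesis
    using card_set_mset_le_size[of M'] by simp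
qed

lemma nonlinearity_arepl_at_fresh:
  assumes "valid_apos E p" and "valid_apos E q" and "p \<noteq> q"
    and "asubt_at E p = Var x" and "asubt_at E q = Var x" and "y \<notin> vars_atm E"
  shows "nonlinearity (arepl_at E q (Var y)) < nonlinearity E"
proof (cases E)
  case (Atm P ts)
  let ?t = "Fn undefined ts"
  have pq: "q \<noteq> []" "valid_pos ?t p" "valid_pos ?t q" "subt_at ?t p = Var x" "subt_at ?t q = Var x"
    using assms Atm by (auto simp: valid_apos_Atm[where f = undefined] asubt_at_Atm[where f = undefined])
  obtain us where "arepl_at E q (Var y) = Atm P us" "repl_at ?t q (Var y) = Fn undefined us"
    using arepl_at_Atm[OF pq(1), where P = P and ts = ts and r = "Var y" and f = undefined] Atm
    by blast
  then have "atm_var_occs (arepl_at E q (Var y)) + {#x#} = atm_var_occs E + {#y#}"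
    using var_occs_repl_at[OF pq(3,5), of y] Atm by (simp add: atm_var_occs_Atm[where f = undefined])
  moreover have "2 \<le> count (atm_var_occs E) x"
    using count_var_occs_ge_2[OF pq(2,3) assms(3) pq(4,5)] Atm by (simp add: atm_var_occs_def)
  moreover have "y \<notin># atm_var_occs E"
    using assms(6) by (simp add: set_atm_var_occs)
  ultimately show ?thesis
    unfolding nonlinearity_def set_atm_var_occs[symmetric] by (rule size_minus_card_set_mset_less)
qed

definition head_deep_fun_count :: "('p, 'f, 'v) cls \<Rightarrow> nat" where
  "head_deep_fun_count C = (\<Sum>E\<in>#snd C. deep_fun_count E)"

definition head_nonlinearity :: "('p, 'f, 'v) cls \<Rightarrow> nat" where
  "head_nonlinearity C = (\<Sum>E\<in>#snd C. nonlinearity E)"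

definition atm_sig :: "('p, 'f, 'v) atm \<Rightarrow> 'p \<times> nat" where
  "atm_sig A = (atm_pred A, length (atm_args A))"

definition nonmonadic_preds :: "('p, 'f, 'v) cls set \<Rightarrow> 'p set" where
  "nonmonadic_preds N = {atm_pred A |A C. C \<in> N \<and> A \<in> atoms_cls C \<and> 1 < length (atm_args A)}"

definition non_horn :: "('p, 'f, 'v) cls set \<Rightarrow> ('p, 'f, 'v) cls set" where
  "non_horn N = {C \<in> N. 1 < size (snd C)}"

definition apr_measure :: "('p, 'f, 'v) cls set \<Rightarrow> nat \<times> nat \<times> nat \<times> nat" where
  "apr_measure N = (card (nonmonadic_preds N), card (non_horn N),
     \<Sum>C\<in>N. head_deep_fun_count C, \<Sum>C\<in>N. head_nonlinearity C)"

definition apr_less :: "(('p, 'f, 'v) cls set \<times> ('p, 'f, 'v) cls set) set" where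
  "apr_less = inv_image (less_than <*lex*> less_than <*lex*> less_than <*lex*> less_than) apr_measure"

lemma wf_apr_less: "wf apr_less"
  unfolding apr_less_def by (intro wf_inv_image wf_lex_prod wf_less_than)

lemma atm_sig_arepl_at [simp]: "atm_sig (arepl_at E p r) = atm_sig E"
  by (cases E; cases p) (simp_all add: atm_sig_def)

lemma atm_sig_subst_atm [simp]: "atm_sig (subst_atm \<sigma> A) = atm_sig A"
  by (cases A) (simp add: atm_sig_def)

lemma finite_nonmonadic_preds: "finite N \<Longrightarrow> finite (nonmonadic_preds N)"
proof -
  assume "finite N"
  then have "finite (\<Union>C\<in>N. atm_pred ` atoms_cls C)"
    by (auto simp: atoms_cls_def)
  moreover have "nonmonadic_preds N \<subseteq> (\<Union>C\<in>N. atm_pred ` atoms_cls C)"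
    by (auto simp: nonmonadic_preds_def)
  ultimately show ?thesis by (rule finite_subset[rotated])
qed

lemma nonmonadic_preds_replace:
  assumes "C \<in> N"
    and "\<And>D A. D \<in> M \<Longrightarrow> A \<in> atoms_cls D \<Longrightarrow> 1 < length (atm_args A) \<Longrightarrow>
           atm_sig A \<in> atm_sig ` atoms_cls C"
  shows "nonmonadic_preds (N - {C} \<union> M) \<subseteq> nonmonadic_preds N"
proof
  fix Q
  assume "Q \<in> nonmonadic_preds (N - {C} \<union> M)"
  then obtain A D where "D \<in> N - {C} \<union> M" "A \<in> atoms_cls D" "1 < length (atm_args A)" "Q = atm_pred A"
    by (auto simp: nonmonadic_preds_def)
  then consider "D \<in> N" | B where "B \<in> atoms_cls C" "atm_sig B = atm_sig A"
    using assms(2) by (metis DiffD1 UnE image_iff)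
  then show "Q \<in> nonmonadic_preds N"
  proof cases
    case 1
    then show ?thesis
      using \<open>A \<in> atoms_cls D\<close> \<open>1 < length (atm_args A)\<close> \<open>Q = atm_pred A\<close>
      unfolding nonmonadic_preds_def by blast
  next
    case (2 B)
    then have "atm_pred B = Q" "1 < length (atm_args B)"
      using \<open>1 < length (atm_args A)\<close> \<open>Q = atm_pred A\<close> by (simp_all add: atm_sig_def)
    then show ?thesis
      using assms(1) \<open>B \<in> atoms_cls C\<close> unfolding nonmonadic_preds_def by blast
  qed
qed

lemma non_horn_replace: "\<forall>D\<in>M. size (snd D) \<le> 1 \<Longrightarrow> non_horn (N - {C} \<union> M) \<subseteq> non_horn N - {C}"
  by (auto simp: non_horn_def)

lemma finite_non_horn: "finite N \<Longrightarrow> finite (non_horn N)"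
  by (simp add: non_horn_def)

lemma sum_replace_le:
  fixes g :: "'a \<Rightarrow> nat"
  assumes "finite N" and "C \<in> N" and "finite M"
  shows "sum g (N - {C} \<union> M) + g C \<le> sum g N + sum g M"
proof -
  have "sum g (N - {C} \<union> M) \<le> sum g (N - {C}) + sum g M"
    using assms by (simp add: sum_Un_nat)
  moreover have "sum g N = g C + sum g (N - {C})"
    using assms by (simp add: sum.remove)
  ultimately show ?thesis by simp
qed

lemma mu_atm_nonmonadic:
  "1 < length (atm_args (mu_atm T fP P A)) \<Longrightarrow> mu_atm T fP P A = A \<and> atm_pred A \<noteq> P"
  by (cases A) (auto split: if_splits)

lemma monadic_step_apr_less:
  assumes "finite N" and "monadic_step T fP N N'"
  shows "(N', N) \<in> apr_less"
proof -
  obtain P where "P \<in> nonmonadic_preds N" and N': "N' = mu_cls T fP P ` N"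
    using assms(2) unfolding monadic_step_def nonmonadic_preds_def by force
  have "nonmonadic_preds N' \<subseteq> nonmonadic_preds N - {P}"
  proof
    fix Q
    assume "Q \<in> nonmonadic_preds N'"
    then obtain A C where "C \<in> N" "A \<in> atoms_cls C"
      and "1 < length (atm_args (mu_atm T fP P A))" "Q = atm_pred (mu_atm T fP P A)"
      unfolding N' nonmonadic_preds_def by (auto simp: atoms_cls_def mu_cls_def)
    then show "Q \<in> nonmonadic_preds N - {P}"
      using mu_atm_nonmonadic unfolding nonmonadic_preds_def by fastforce
  qed
  then have "nonmonadic_preds N' \<subset> nonmonadic_preds N"
    using \<open>P \<in> nonmonadic_preds N\<close> by auto
  then have "card (nonmonadic_preds N') < card (nonmonadic_preds N)"
    using finite_nonmonadic_preds[OF assms(1)] by (intro psubset_card_mono)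
  then show ?thesis by (simp add: apr_less_def apr_measure_def)
qed

lemma horn_step_apr_less:
  assumes "finite N" and "horn_step N N'"
  shows "(N', N) \<in> apr_less"
proof -
  obtain \<Gamma> \<Delta> E where C: "(\<Gamma>, \<Delta>) \<in> N" "1 < size \<Delta>" "E \<in># \<Delta>"
    and N': "N' = N - {(\<Gamma>, \<Delta>)} \<union> {(\<Gamma>, {#E#})}"
    using assms(2) unfolding horn_step_def by blast
  have "nonmonadic_preds N' \<subseteq> nonmonadic_preds N"
    unfolding N' using C by (intro nonmonadic_preds_replace) (auto simp: atoms_cls_def)
  then have "card (nonmonadic_preds N') \<le> card (nonmonadic_preds N)"
    using finite_nonmonadic_preds[OF assms(1)] by (intro card_mono)
  moreover have "card (non_horn N') < card (non_horn N)"
  proof -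
    have "non_horn N' \<subseteq> non_horn N - {(\<Gamma>, \<Delta>)}"
      unfolding N' by (intro non_horn_replace) simp
    then have "card (non_horn N') \<le> card (non_horn N - {(\<Gamma>, \<Delta>)})"
      using finite_non_horn[OF assms(1)] by (intro card_mono) auto
    also have "\<dots> < card (non_horn N)"
      using finite_non_horn[OF assms(1)] C by (intro card_Diff1_less) (auto simp: non_horn_def)
    finally show ?thesis .
  qed
  ultimately show ?thesis by (auto simp: apr_less_def apr_measure_def)
qed

lemma shallow_step_apr_less:
  assumes "finite N" and "shallow_step N N'"
  shows "(N', N) \<in> apr_less"
proof -
  obtain \<Gamma> E i q s x S \<Gamma>1 \<Gamma>2 where
    C: "(\<Gamma>, {#E#}) \<in> N" and p: "valid_apos E (i # q)" "q \<noteq> []" "asubt_at E (i # q) = s"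
    and "\<exists>f us. s = Fn f us" and \<Gamma>: "\<Gamma>1 \<union># \<Gamma>2 = \<Gamma>"
    and N': "N' = N - {(\<Gamma>, {#E#})} \<union>
               {(add_mset (Atm S [Var x]) \<Gamma>1, {#arepl_at E (i # q) (Var x)#}), (\<Gamma>2, {#Atm S [s]#})}"
    using assms(2) unfolding shallow_step_def by blast
  obtain f us where s: "s = Fn f us"
    using \<open>\<exists>f us. s = Fn f us\<close> by blast
  let ?C1 = "(add_mset (Atm S [Var x]) \<Gamma>1, {#arepl_at E (i # q) (Var x)#})"
    and ?C2 = "(\<Gamma>2, {#Atm S [s]#})"
  have "nonmonadic_preds N' \<subseteq> nonmonadic_preds N"
    unfolding N' using C \<Gamma> by (intro nonmonadic_preds_replace) (auto simp: atoms_cls_def)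
  then have "card (nonmonadic_preds N') \<le> card (nonmonadic_preds N)"
    using finite_nonmonadic_preds[OF assms(1)] by (intro card_mono)
  moreover have "non_horn N' \<subseteq> non_horn N - {(\<Gamma>, {#E#})}"
    unfolding N' by (intro non_horn_replace) simp
  then have "card (non_horn N') \<le> card (non_horn N)"
    using finite_non_horn[OF assms(1)] by (intro card_mono) auto
  moreover have "head_deep_fun_count ?C1 + head_deep_fun_count ?C2 < head_deep_fun_count (\<Gamma>, {#E#})"
    using deep_fun_count_shallow_split[OF p(1,2), of f us x S] p(3) s by (auto simp: head_deep_fun_count_def)
  then have "(\<Sum>C\<in>N'. head_deep_fun_count C) < (\<Sum>C\<in>N. head_deep_fun_count C)"
    using sum_replace_le[OF assms(1) C, of "{?C1, ?C2}" head_deep_fun_count]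
    unfolding N' by (simp add: sum.insert_if split: if_splits)
  ultimately show ?thesis by (auto simp: apr_less_def apr_measure_def)
qed

lemma linear_step_apr_less:
  assumes "finite N" and "linear_step N N'"
  shows "(N', N) \<in> apr_less"
proof -
  obtain \<Gamma> E p q x x' where
    C: "(\<Gamma>, {#E#}) \<in> N" and pq: "p \<noteq> q" "valid_apos E p" "valid_apos E q"
    "asubt_at E p = Var x" "asubt_at E q = Var x" and x': "x' \<notin> vars_cls (\<Gamma>, {#E#})"
    and N': "N' = N - {(\<Gamma>, {#E#})} \<union>
               {(image_mset (subst_atm (Var(x := Var x'))) \<Gamma> + \<Gamma>, {#arepl_at E q (Var x')#})}"
    using assms(2) unfolding linear_step_def by blast
  let ?C1 = "(image_mset (subst_atm (Var(x := Var x'))) \<Gamma> + \<Gamma>, {#arepl_at E q (Var x')#})"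
  have "nonmonadic_preds N' \<subseteq> nonmonadic_preds N"
    unfolding N' using C by (intro nonmonadic_preds_replace) (auto simp: atoms_cls_def)
  then have "card (nonmonadic_preds N') \<le> card (nonmonadic_preds N)"
    using finite_nonmonadic_preds[OF assms(1)] by (intro card_mono)
  moreover have "non_horn N' \<subseteq> non_horn N - {(\<Gamma>, {#E#})}"
    unfolding N' by (intro non_horn_replace) simp
  then have "card (non_horn N') \<le> card (non_horn N)"
    using finite_non_horn[OF assms(1)] by (intro card_mono) auto
  moreover have "head_deep_fun_count ?C1 = head_deep_fun_count (\<Gamma>, {#E#})"
    using deep_fun_count_arepl_at_Var[OF pq(3,5)] by (simp add: head_deep_fun_count_def)
  then have "(\<Sum>C\<in>N'. head_deep_fun_count C) \<le> (\<Sum>C\<in>N. head_deep_fun_count C)"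
    using sum_replace_le[OF assms(1) C, of "{?C1}" head_deep_fun_count] unfolding N' by simp
  moreover have "head_nonlinearity ?C1 < head_nonlinearity (\<Gamma>, {#E#})"
    using nonlinearity_arepl_at_fresh[OF pq(2,3,1,4,5)] x' by (simp add: head_nonlinearity_def vars_cls_unit)
  then have "(\<Sum>C\<in>N'. head_nonlinearity C) < (\<Sum>C\<in>N. head_nonlinearity C)"
    using sum_replace_le[OF assms(1) C, of "{?C1}" head_nonlinearity] unfolding N' by simp
  ultimately show ?thesis by (auto simp: apr_less_def apr_measure_def)
qed

lemma apr_step_apr_less:
  assumes "finite N" and "apr_step T fP N N'"
  shows "(N', N) \<in> apr_less"
  using assms(2) unfolding apr_step_def
  by (elim disjE conjE)
    (simp_all add: assms(1) monadic_step_apr_less horn_step_apr_less shallow_step_apr_less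
      linear_step_apr_less)

lemma finite_apr_step: "finite N \<Longrightarrow> apr_step T fP N N' \<Longrightarrow> finite N'"
  unfolding apr_step_def monadic_step_def horn_step_def shallow_step_def linear_step_def by auto

lemma apr_step_terminates:
  assumes "finite N0"
  shows "\<nexists>Ns. Ns 0 = N0 \<and> (\<forall>i. apr_step T fP (Ns i) (Ns (Suc i)))"
proof
  assume "\<exists>Ns. Ns 0 = N0 \<and> (\<forall>i. apr_step T fP (Ns i) (Ns (Suc i)))"
  then obtain Ns where "Ns 0 = N0" and step: "\<And>i. apr_step T fP (Ns i) (Ns (Suc i))"
    by blast
  have "finite (Ns i)" for i
    using assms \<open>Ns 0 = N0\<close> step by (induction i) (auto intro: finite_apr_step)
  then have "(Ns (Suc i), Ns i) \<in> apr_less" for i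
    using step by (rule apr_step_apr_less)
  then show False
    using wf_apr_less unfolding wf_iff_no_infinite_down_chain by blast
qed

theorem lemma1:
  fixes T :: 'p and fP :: "'p \<Rightarrow> 'f"
  assumes "inj fP"
  shows "(\<forall>N0 :: ('p, 'f, 'v) cls set.
            finite N0 \<and> T \<notin> preds_set N0 \<and> (\<forall>P. fP P \<notin> funs_set N0) \<longrightarrow>
            \<not> (\<exists>Ns. Ns 0 = N0 \<and> (\<forall>i. apr_step T fP (Ns i) (Ns (Suc i)))))
       \<and> over_approximation (monadic_step T fP :: ('p, 'f, 'v) cls set \<Rightarrow> _ \<Rightarrow> bool)
       \<and> over_approximation (horn_step :: ('p, 'f, 'v) cls set \<Rightarrow> _ \<Rightarrow> bool)
       \<and> over_approximation (shallow_step :: ('p, 'f, 'v) cls set \<Rightarrow> _ \<Rightarrow> bool)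
       \<and> over_approximation (linear_step :: ('p, 'f, 'v) cls set \<Rightarrow> _ \<Rightarrow> bool)"
proof (intro conjI allI impI)
  fix N0 :: "('p, 'f, 'v) cls set"
  assume "finite N0 \<and> T \<notin> preds_set N0 \<and> (\<forall>P. fP P \<notin> funs_set N0)"
  then show "\<not> (\<exists>Ns. Ns 0 = N0 \<and> (\<forall>i. apr_step T fP (Ns i) (Ns (Suc i))))"
    by (intro apr_step_terminates) simp
qed (rule over_approximation_monadic_step over_approximation_horn_step
       over_approximation_shallow_step over_approximation_linear_step)+

end
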